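(* Let $I\subseteq E$ and let $v\in\Delta_I$ be an equilibrium ($F(v)=0$). Then $v$ is linearly stable (respectively linearly unstable) if and only if all eigenvalues of the restriction of $DF(v)$ to $V_I=\{x\in\mathbb R^N:\sum_ix_i=0,\ x_i=0\ \forall i\notin I\}$ have negative real parts (respectively, some eigenvalue of this restriction has positive real part), i.e. if and only if it is linearly stable (respectively unstable) for the restriction of $F$ to the face $\Delta_I$.
   Context: Let $N\ge2$, $E=\{1,\dots,N\}$, $\alpha>1$, and let $A=(A_{i,j})_{i,j\le N}$ be a symmetric matrix with nonnegative entries, $A_{i,j}>0$ for $i\ne j$, and $\sum_j A_{i,j}$ independent of $i$. Let $\Delta=\{v\in\mathbb R_+^N:\ \sum_i v_i=1,\ v_i\le 3/4 \text{ whenever } A_{i,i}=0\}$ and $\Delta_I=\{v\in\Delta: v_i=0\ \forall i\notin I\}$. For $v$ with nonnegative coordinates let $v^\alpha=(v_i^\alpha)_i$, $H(v)=\sum_{i,j}A_{i,j}v_i^\alpha v_j^\alpha$ and $\pi_i(v)=v_i^\alpha(Av^\alpha)_i/H(v)$; on $\Delta$, $F(v)=-v+\pi(v)$, and $DF(v)$ is the differential at $v$ of $v\mapsto-v+\pi(v)$, viewed as a linear map of $T_0\Delta=\{x:\sum_ix_i=0\}$ (the subspace $V_I$ is invariant under it when $v\in\Delta_I$ is an equilibrium). An equilibrium $v$ is linearly stable if all eigenvalues of $DF(v)$ have negative real parts, and linearly unstable if one of them has positive real part. *)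

theory Defs
  imports "HOL-Analysis.Analysis"
begin

text \<open>Index set E is a finite type 'n; vectors in R^N are real^'n.
  The coordinatewise power v^alpha is taken as |v_i| powr alpha, which agrees with
  v_i^alpha on nonnegative vectors and gives a map defined on a whole neighbourhood
  of the simplex (alpha > 1 makes it C^1), so that the differential is the ordinary one.\<close>

definition vpow :: "real \<Rightarrow> real^'n \<Rightarrow> real^'n" where
  "vpow \<alpha> v = (\<chi> i. \<bar>v $ i\<bar> powr \<alpha>)"

definition Hfun :: "real^'n^'n \<Rightarrow> real \<Rightarrow> real^'n \<Rightarrow> real" where
  "Hfun A \<alpha> v = (\<Sum>i\<in>UNIV. \<Sum>j\<in>UNIV. A $ i $ j * vpow \<alpha> v $ i * vpow \<alpha> v $ j)"

definition pifun :: "real^'n^'n \<Rightarrow> real \<Rightarrow> real^'n \<Rightarrow> real^'n" where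
  "pifun A \<alpha> v = (\<chi> i. vpow \<alpha> v $ i * (A *v vpow \<alpha> v) $ i / Hfun A \<alpha> v)"

definition Ffun :: "real^'n^'n \<Rightarrow> real \<Rightarrow> real^'n \<Rightarrow> real^'n" where
  "Ffun A \<alpha> v = - v + pifun A \<alpha> v"

definition DF :: "real^'n^'n \<Rightarrow> real \<Rightarrow> real^'n \<Rightarrow> real^'n \<Rightarrow> real^'n" where
  "DF A \<alpha> v = frechet_derivative (Ffun A \<alpha>) (at v)"

definition Delta :: "real^'n^'n \<Rightarrow> (real^'n) set" where
  "Delta A = {v. (\<forall>i. 0 \<le> v $ i) \<and> (\<Sum>i\<in>UNIV. v $ i) = 1 \<and> (\<forall>i. A $ i $ i = 0 \<longrightarrow> v $ i \<le> 3/4)}"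

definition Delta_face :: "real^'n^'n \<Rightarrow> 'n set \<Rightarrow> (real^'n) set" where
  "Delta_face A I = {v \<in> Delta A. \<forall>i. i \<notin> I \<longrightarrow> v $ i = 0}"

definition T0 :: "(real^'n) set" where
  "T0 = {x. (\<Sum>i\<in>UNIV. x $ i) = 0}"

definition V_face :: "'n set \<Rightarrow> (real^'n) set" where
  "V_face I = {x \<in> T0. \<forall>i. i \<notin> I \<longrightarrow> x $ i = 0}"

text \<open>Complex eigenvalues of the restriction of a real linear map L to a subspace W:
  eigenvalues of the complexification, i.e. lambda such that L(x + i y) = lambda (x + i y)
  for some nonzero x + i y with x, y in W.\<close>
definition eigenvalues_on :: "('a::real_vector \<Rightarrow> 'a) \<Rightarrow> 'a set \<Rightarrow> complex set" where
  "eigenvalues_on L W = {z. \<exists>x y. x \<in> W \<and> y \<in> W \<and> (x \<noteq> 0 \<or> y \<noteq> 0) \<and>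
      L x = Re z *\<^sub>R x - Im z *\<^sub>R y \<and> L y = Im z *\<^sub>R x + Re z *\<^sub>R y}"

definition lin_stable_on :: "('a::real_vector \<Rightarrow> 'a) \<Rightarrow> 'a set \<Rightarrow> bool" where
  "lin_stable_on L W \<longleftrightarrow> (\<forall>z\<in>eigenvalues_on L W. Re z < 0)"

definition lin_unstable_on :: "('a::real_vector \<Rightarrow> 'a) \<Rightarrow> 'a set \<Rightarrow> bool" where
  "lin_unstable_on L W \<longleftrightarrow> (\<exists>z\<in>eigenvalues_on L W. Re z > 0)"

end

theory Submission
  imports Defs
begin

text \<open>Since \<open>\<alpha> > 1\<close>, the map \<open>t \<mapsto> |t|\<^sup>\<alpha>\<close> is differentiable with derivative \<open>0\<close> at \<open>t = 0\<close>.
  Hence at a point \<open>v\<close> of the face \<open>\<Delta>\<^sub>I\<close>, where \<open>v\<^sub>i = 0\<close> for \<open>i \<notin> I\<close>, the component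
  \<open>\<pi>\<^sub>i = v\<^sub>i\<^sup>\<alpha> (Av\<^sup>\<alpha>)\<^sub>i / H(v)\<close> has zero differential, so \<open>DF(v)\<close> acts as \<open>-id\<close> on the
  coordinates outside \<open>I\<close>. A complex eigenvector of \<open>DF(v)\<close> on \<open>T\<^sub>0\<Delta>\<close> is therefore either
  supported in \<open>I\<close>, i.e. lies in \<open>V\<^sub>I\<close>, or has eigenvalue with real part \<open>-1\<close>; such eigenvalues
  affect neither stability nor instability.\<close>

lemma abs_powr_has_real_derivative_0:
  assumes "(\<alpha>::real) > 1"
  shows "((\<lambda>t::real. \<bar>t\<bar> powr \<alpha>) has_real_derivative 0) (at 0)"
proof -
  have "((\<lambda>h. \<bar>h\<bar> powr (\<alpha> - 1)) \<longlongrightarrow> 0) (at (0::real))"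
    using assms by (intro tendsto_zero_powrI) (auto intro!: tendsto_eq_intros)
  hence "((\<lambda>h. norm ((\<bar>h\<bar> powr \<alpha> - \<bar>0\<bar> powr \<alpha>) / h)) \<longlongrightarrow> 0) (at (0::real))"
  proof (rule Lim_transform_eventually)
    show "\<forall>\<^sub>F h in at 0. \<bar>h\<bar> powr (\<alpha> - 1) = norm ((\<bar>h\<bar> powr \<alpha> - \<bar>0\<bar> powr \<alpha>) / h)"
      unfolding eventually_at_filter by (auto simp: powr_diff abs_divide)
  qed
  hence "((\<lambda>h. (\<bar>0 + h\<bar> powr \<alpha> - \<bar>0\<bar> powr \<alpha>) / h) \<longlongrightarrow> 0) (at (0::real))"
    using tendsto_norm_zero_cancel by fastforce
  thus ?thesis
    unfolding DERIV_def .
qed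

lemma abs_powr_differentiable:
  assumes "(\<alpha>::real) > 1"
  shows "(\<lambda>t::real. \<bar>t\<bar> powr \<alpha>) differentiable (at t)"
proof -
  consider "t = 0" | "t > 0" | "t < 0" by linarith
  thus ?thesis
  proof cases
    case 1
    thus ?thesis using abs_powr_has_real_derivative_0[OF assms] real_differentiable_def by blast
  next
    case 2
    have ev: "\<forall>\<^sub>F x in nhds t. \<bar>x\<bar> powr \<alpha> = x powr \<alpha>"
      using eventually_nhds_in_open[of "{0<..}" t] 2 by (auto elim!: eventually_mono)
    have "((\<lambda>x. x powr \<alpha>) has_real_derivative \<alpha> * t powr (\<alpha> - 1)) (at t)"
      using has_real_derivative_powr 2 by blast
    hence "((\<lambda>x. \<bar>x\<bar> powr \<alpha>) has_real_derivative \<alpha> * t powr (\<alpha> - 1)) (at t)"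
      by (rule DERIV_cong_ev[OF refl ev refl, THEN iffD2])
    thus ?thesis using real_differentiable_def by blast
  next
    case 3
    have ev: "\<forall>\<^sub>F x in nhds t. \<bar>x\<bar> powr \<alpha> = (- x) powr \<alpha>"
      using eventually_nhds_in_open[of "{..<0}" t] 3 by (auto elim!: eventually_mono)
    have "((\<lambda>x. (- x) powr \<alpha>) has_real_derivative \<alpha> * (- t) powr (\<alpha> - of_nat 1) * (- 1)) (at t)"
      by (rule DERIV_fun_powr) (use 3 in \<open>auto intro!: derivative_eq_intros\<close>)
    hence "((\<lambda>x. \<bar>x\<bar> powr \<alpha>) has_real_derivative \<alpha> * (- t) powr (\<alpha> - of_nat 1) * (- 1)) (at t)"
      by (rule DERIV_cong_ev[OF refl ev refl, THEN iffD2])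
    thus ?thesis using real_differentiable_def by blast
  qed
qed

lemma differentiable_vec_componentwise:
  fixes F :: "real^'m \<Rightarrow> real^'n"
  assumes "\<And>i. (\<lambda>w. F w $ i) differentiable (at v)"
  shows "F differentiable (at v)"
  using assms unfolding differentiable_componentwise_within[of F v UNIV]
  by (auto simp: Basis_vec_def cart_eq_inner_axis[symmetric])

lemma vpow_nth_differentiable:
  assumes "\<alpha> > 1"
  shows "(\<lambda>w::real^'n. vpow \<alpha> w $ j) differentiable (at v)"
  unfolding vpow_def vec_lambda_beta
  by (rule differentiable_compose[of "\<lambda>t. \<bar>t\<bar> powr \<alpha>"])
     (auto intro: abs_powr_differentiable[OF assms] bounded_linear_imp_differentiable)

lemma vpow_nth_has_derivative_0:
  assumes "\<alpha> > 1" and "v $ i = 0"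
  shows "((\<lambda>w::real^'n. vpow \<alpha> w $ i) has_derivative (\<lambda>_. 0)) (at v)"
proof -
  have "((\<lambda>t::real. \<bar>t\<bar> powr \<alpha>) has_derivative (\<lambda>h. 0 * h)) (at (v $ i))"
    using abs_powr_has_real_derivative_0[OF assms(1)]
    unfolding assms(2) has_field_derivative_def .
  from has_derivative_compose[OF bounded_linear.has_derivative[OF bounded_linear_vec_nth
        has_derivative_ident] this[unfolded has_derivative_at_withinI]]
  show ?thesis by (simp add: vpow_def)
qed

lemma Ffun_nth:
  "Ffun A \<alpha> w $ i = - w $ i + vpow \<alpha> w $ i * ((A *v vpow \<alpha> w) $ i / Hfun A \<alpha> w)"
  by (simp add: Ffun_def pifun_def)

lemma fitness_ratio_differentiable:
  fixes A :: "real^'n^'n"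
  assumes "\<alpha> > 1" and "Hfun A \<alpha> v \<noteq> 0"
  shows "(\<lambda>w. (A *v vpow \<alpha> w) $ i / Hfun A \<alpha> w) differentiable (at v)"
  using assms vpow_nth_differentiable[OF assms(1)]
  unfolding matrix_vector_mult_def vec_lambda_beta Hfun_def
  by (intro differentiable_divide differentiable_sum differentiable_mult) auto

lemma Ffun_differentiable:
  fixes A :: "real^'n^'n"
  assumes "\<alpha> > 1" and "Hfun A \<alpha> v \<noteq> 0"
  shows "Ffun A \<alpha> differentiable (at v)"
proof (rule differentiable_vec_componentwise)
  fix i
  show "(\<lambda>w. Ffun A \<alpha> w $ i) differentiable (at v)"
    unfolding Ffun_nth
    using fitness_ratio_differentiable[OF assms] vpow_nth_differentiable[OF assms(1)]
    by (intro differentiable_add differentiable_minus differentiable_mult)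
       (auto intro: bounded_linear_imp_differentiable)
qed

lemma DF_nth_off_support:
  fixes A :: "real^'n^'n"
  assumes alpha: "\<alpha> > 1" and H: "Hfun A \<alpha> v \<noteq> 0" and vi: "v $ i = 0"
  shows "DF A \<alpha> v x $ i = - x $ i"
proof -
  define G where "G = (\<lambda>w. (A *v vpow \<alpha> w) $ i / Hfun A \<alpha> w)"
  obtain G' where G': "(G has_derivative G') (at v)"
    using fitness_ratio_differentiable[OF alpha H] unfolding G_def differentiable_def by blast
  have "((\<lambda>w. Ffun A \<alpha> w $ i) has_derivative (\<lambda>x. DF A \<alpha> v x $ i)) (at v)"
    unfolding DF_def
    using bounded_linear.has_derivative[OF bounded_linear_vec_nth
        frechet_derivative_works[THEN iffD1, OF Ffun_differentiable[OF alpha H]]] .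
  moreover have "(\<lambda>w. Ffun A \<alpha> w $ i) = (\<lambda>w. - w $ i + vpow \<alpha> w $ i * G w)"
    by (simp add: Ffun_nth G_def)
  hence "((\<lambda>w. Ffun A \<alpha> w $ i) has_derivative
      (\<lambda>x. - x $ i + (vpow \<alpha> v $ i * G' x + 0 * G v))) (at v)"
    by (simp only:) (intro has_derivative_add has_derivative_minus
        has_derivative_mult[OF vpow_nth_has_derivative_0[OF alpha vi] G']
        bounded_linear.has_derivative[OF bounded_linear_vec_nth has_derivative_ident])
  ultimately have "(\<lambda>x. DF A \<alpha> v x $ i) = (\<lambda>x. - x $ i + (vpow \<alpha> v $ i * G' x + 0 * G v))"
    by (rule has_derivative_unique)
  thus ?thesis
    using alpha vi by (simp add: vpow_def fun_eq_iff)
qed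

lemma Hfun_nonzero_if_equilibrium:
  assumes "Ffun A \<alpha> v = 0" and "(\<Sum>i\<in>UNIV. v $ i) = 1"
  shows "Hfun A \<alpha> v \<noteq> 0"
proof
  assume "Hfun A \<alpha> v = 0"
  hence "v = 0"
    using assms(1) by (simp add: Ffun_def pifun_def vec_eq_iff)
  thus False
    using assms(2) by simp
qed

lemma eigenvalues_on_mono:
  "W \<subseteq> W' \<Longrightarrow> eigenvalues_on L W \<subseteq> eigenvalues_on L W'"
  unfolding eigenvalues_on_def by blast

lemma eigenvalues_on_T0_cases:
  fixes L :: "real^'n \<Rightarrow> real^'n"
  assumes L: "\<And>x i. i \<notin> I \<Longrightarrow> L x $ i = - x $ i"
    and z: "z \<in> eigenvalues_on L T0"
  shows "z \<in> eigenvalues_on L (V_face I) \<or> Re z = -1"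
proof -
  obtain x y where xy: "x \<in> T0" "y \<in> T0" "x \<noteq> 0 \<or> y \<noteq> 0"
    "L x = Re z *\<^sub>R x - Im z *\<^sub>R y" "L y = Im z *\<^sub>R x + Re z *\<^sub>R y"
    using z unfolding eigenvalues_on_def by blast
  show ?thesis
  proof (cases "\<exists>i. i \<notin> I \<and> (x $ i \<noteq> 0 \<or> y $ i \<noteq> 0)")
    case False
    hence "x \<in> V_face I" "y \<in> V_face I"
      using xy unfolding V_face_def by auto
    thus ?thesis
      using xy unfolding eigenvalues_on_def by blast
  next
    case True
    then obtain i where i: "i \<notin> I" "x $ i \<noteq> 0 \<or> y $ i \<noteq> 0" by blast
    define a b r s where "a = x $ i" and "b = y $ i" and "r = Re z" and "s = Im z"
    have "- a = r * a - s * b"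
      using arg_cong[OF xy(4), of "\<lambda>u. u $ i"] L[OF i(1), of x] by (simp add: a_def b_def r_def s_def)
    hence ra: "(r + 1) * a = s * b" by algebra
    have "- b = s * a + r * b"
      using arg_cong[OF xy(5), of "\<lambda>u. u $ i"] L[OF i(1), of y] by (simp add: a_def b_def r_def s_def)
    hence rb: "(r + 1) * b = - s * a" by algebra
    have "(r + 1) * (a * a + b * b) = ((r + 1) * a) * a + ((r + 1) * b) * b"
      by (simp add: algebra_simps)
    also have "\<dots> = 0"
      unfolding ra rb by simp
    finally have "(r + 1) * (a * a + b * b) = 0" .
    moreover have "a * a + b * b > 0"
      using i(2) unfolding a_def b_def by (simp add: sum_squares_gt_zero_iff)
    ultimately have "r + 1 = 0"
      by auto
    thus ?thesis
      unfolding r_def by simp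
  qed
qed

lemma lin_stability_eq_if_extra_eigenvalues_negative:
  assumes "W \<subseteq> W'"
    and "\<And>z. z \<in> eigenvalues_on L W' \<Longrightarrow> z \<in> eigenvalues_on L W \<or> Re z < 0"
  shows "(lin_stable_on L W' \<longleftrightarrow> lin_stable_on L W) \<and>
         (lin_unstable_on L W' \<longleftrightarrow> lin_unstable_on L W)"
  using assms(2) eigenvalues_on_mono[OF assms(1)]
  unfolding lin_stable_on_def lin_unstable_on_def by (smt (verit) subsetD)

theorem corollary3p8:
  fixes A :: "real^'n^'n" and \<alpha> :: real and I :: "'n set" and v :: "real^'n"
  assumes N2: "CARD('n) \<ge> 2"
    and alpha: "\<alpha> > 1"
    and symm: "\<And>i j. A $ i $ j = A $ j $ i"
    and nonneg: "\<And>i j. 0 \<le> A $ i $ j"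
    and offdiag: "\<And>i j. i \<noteq> j \<Longrightarrow> 0 < A $ i $ j"
    and rowsum: "\<exists>c. \<forall>i. (\<Sum>j\<in>UNIV. A $ i $ j) = c"
    and vface: "v \<in> Delta_face A I"
    and equil: "Ffun A \<alpha> v = 0"
  shows "(lin_stable_on (DF A \<alpha> v) T0 \<longleftrightarrow> lin_stable_on (DF A \<alpha> v) (V_face I)) \<and>
         (lin_unstable_on (DF A \<alpha> v) T0 \<longleftrightarrow> lin_unstable_on (DF A \<alpha> v) (V_face I))"
proof (rule lin_stability_eq_if_extra_eigenvalues_negative)
  show "V_face I \<subseteq> T0"
    by (auto simp: V_face_def)
  have H: "Hfun A \<alpha> v \<noteq> 0"
    using Hfun_nonzero_if_equilibrium[OF equil] vface by (simp add: Delta_face_def Delta_def)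
  have "\<And>x i. i \<notin> I \<Longrightarrow> DF A \<alpha> v x $ i = - x $ i"
    using vface by (simp add: Delta_face_def DF_nth_off_support[OF alpha H])
  from eigenvalues_on_T0_cases[OF this]
  show "z \<in> eigenvalues_on (DF A \<alpha> v) (V_face I) \<or> Re z < 0"
    if "z \<in> eigenvalues_on (DF A \<alpha> v) T0" for z
    using that by fastforce
qed

end
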